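(* Let $\{x^k\}_{k\in\mathbb N}$ and $\{d^k\}_{k\in\mathbb N}$ be sequences in $\mathbb R^n$ such that $$\sum_{k=1}^\infty \|x^{k+1}-x^k\|\cdot\|d^k\|<\infty.$$ If $\bar x$ is an accumulation point of $\{x^k\}$ and $0$ is an accumulation point of $\{d^k\}$, then there exists an infinite set $J\subset\mathbb N$ such that $x^k\to\bar x$ and $d^k\to 0$ as $k\to\infty$, $k\in J$.
   Context: $\|\cdot\|$ is the Euclidean norm on $\mathbb R^n$ and $\mathbb N=\{1,2,\dots\}$. *)

theory Defs
  imports "HOL-Analysis.Analysis"
begin

end

theory Submission
  imports Defs
begin

text \<open>
  If \<open>x\<^sup>k\<close> came close to \<open>xbar\<close> infinitely often but never while \<open>\<parallel>d\<^sup>k\<parallel>\<close> is small,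
  then after some index every excursion of \<open>x\<^sup>k\<close> from near \<open>xbar\<close> to a point where \<open>\<parallel>d\<^sup>k\<parallel> < \<epsilon>\<close>
  would have length at least \<open>\<epsilon>/2\<close> and happen while \<open>\<parallel>d\<^sup>k\<parallel> \<ge> \<epsilon>\<close>, so it would cost at least
  \<open>\<epsilon>\<^sup>2/2\<close> of the tail of the convergent series \<open>\<Sum> \<parallel>x\<^sup>k\<^sup>+\<^sup>1 - x\<^sup>k\<parallel> \<parallel>d\<^sup>k\<parallel>\<close>, which is impossible.
  Hence for every \<open>\<epsilon>\<close> both sequences are \<open>\<epsilon>\<close>-close to their limits at infinitely many
  common indices, and a diagonal choice of such indices gives \<open>J\<close>.
\<close>

lemma weighted_dist_le_sum:
  fixes x d :: "nat \<Rightarrow> 'a::real_normed_vector"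
  assumes "m \<le> n" and "e \<ge> 0"
    and large: "\<And>k. m \<le> k \<Longrightarrow> k < n \<Longrightarrow> e \<le> norm (d k)"
  shows "e * dist (x n) (x m) \<le> (\<Sum>k = m..<n. norm (x (Suc k) - x k) * norm (d k))"
proof -
  have "dist (x n) (x m) = norm (\<Sum>k = m..<n. x (Suc k) - x k)"
    using \<open>m \<le> n\<close> by (simp add: sum_Suc_diff' dist_norm)
  also have "\<dots> \<le> (\<Sum>k = m..<n. norm (x (Suc k) - x k))"
    by (rule norm_sum)
  finally have "e * dist (x n) (x m) \<le> (\<Sum>k = m..<n. e * norm (x (Suc k) - x k))"
    using \<open>e \<ge> 0\<close> unfolding sum_distrib_left[symmetric] by (rule mult_left_mono)
  also have "\<dots> \<le> (\<Sum>k = m..<n. norm (x (Suc k) - x k) * norm (d k))"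
    using large by (intro sum_mono) (subst mult.commute, rule mult_left_mono, auto)
  finally show ?thesis .
qed

lemma frequently_close_and_small:
  fixes x d :: "nat \<Rightarrow> 'a::real_normed_vector"
  assumes summ: "summable (\<lambda>k. norm (x (Suc k) - x k) * norm (d k))"
    and acc_x: "\<forall>e>0. \<exists>\<^sub>F k in sequentially. dist (x k) xbar < e"
    and acc_d: "\<forall>e>0. \<exists>\<^sub>F k in sequentially. norm (d k) < e"
    and "e > 0"
  shows "\<exists>\<^sub>F k in sequentially. dist (x k) xbar < e \<and> norm (d k) < e"
proof (rule ccontr)
  assume "\<not> ?thesis"
  then obtain K where K: "\<And>k. k \<ge> K \<Longrightarrow> norm (d k) < e \<Longrightarrow> dist (x k) xbar \<ge> e"
    unfolding frequently_sequentially by (meson not_le)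
  obtain N where N: "\<And>m n. N \<le> m \<Longrightarrow>
      norm (\<Sum>k = m..<n. norm (x (Suc k) - x k) * norm (d k)) < e * e / 2"
    using summ \<open>e > 0\<close> unfolding summable_Cauchy by (metis half_gt_zero mult_pos_pos)
  obtain m where m: "m \<ge> max N K" "dist (x m) xbar < e / 2"
    using acc_x \<open>e > 0\<close> unfolding frequently_sequentially by (meson half_gt_zero)
  have "\<exists>n\<ge>m. norm (d n) < e"
    using acc_d \<open>e > 0\<close> unfolding frequently_sequentially by blast
  define n where "n = (LEAST n. n \<ge> m \<and> norm (d n) < e)"
  have n: "n \<ge> m" "norm (d n) < e"
    using LeastI_ex[OF \<open>\<exists>n\<ge>m. norm (d n) < e\<close>] unfolding n_def by blast+
  have large: "e \<le> norm (d k)" if "m \<le> k" "k < n" for k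
    using not_less_Least[of k "\<lambda>n. n \<ge> m \<and> norm (d n) < e"] that unfolding n_def by auto
  have "e / 2 < dist (x n) (x m)"
    using K[of n] n m dist_triangle[of "x n" xbar "x m"] by (simp add: dist_commute)
  then have "e * (e / 2) < e * dist (x n) (x m)"
    using \<open>e > 0\<close> by simp
  also have "\<dots> \<le> (\<Sum>k = m..<n. norm (x (Suc k) - x k) * norm (d k))"
    using weighted_dist_le_sum[OF \<open>m \<le> n\<close>, of e d x] \<open>e > 0\<close> large by simp
  also have "\<dots> < e * e / 2"
    using N[of m n] m by simp
  finally show False by simp
qed

lemma frequently_diagonal_strict_mono:
  assumes "\<And>n. \<exists>\<^sub>F k in sequentially. P n k"
  obtains r :: "nat \<Rightarrow> nat" where "strict_mono r" and "\<And>n. P n (r n)"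
proof -
  obtain f where f: "\<And>n N. f n N \<ge> N \<and> P n (f n N)"
    using assms unfolding frequently_sequentially by metis
  define r where "r = rec_nat (f 0 0) (\<lambda>n rn. f (Suc n) (Suc rn))"
  have r_Suc: "r (Suc n) = f (Suc n) (Suc (r n))" for n
    unfolding r_def by simp
  have "strict_mono r"
    by (rule strict_monoI_Suc) (metis f r_Suc Suc_le_eq)
  moreover have "P n (r n)" for n
    by (cases n) (use f r_Suc in \<open>auto simp: r_def\<close>)
  ultimately show thesis by (rule that)
qed

lemma inf_sequentially_principal_range_le:
  assumes "strict_mono r"
  shows "inf sequentially (principal (range r)) \<le> filtermap r sequentially"
proof (rule filter_leI)
  fix P assume "eventually P (filtermap r sequentially)"
  then obtain N where N: "\<And>n. n \<ge> N \<Longrightarrow> P (r n)"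
    by (auto simp: eventually_filtermap eventually_sequentially)
  have "k \<in> range r \<longrightarrow> P k" if "k \<ge> r N" for k
    using that N assms by (auto simp: strict_mono_less_eq)
  then show "eventually P (inf sequentially (principal (range r)))"
    unfolding eventually_inf_principal eventually_sequentially by blast
qed

lemma tendsto_inf_principal_range_subseq:
  assumes "strict_mono r" and "(f \<circ> r) \<longlonglongrightarrow> l"
  shows "(f \<longlongrightarrow> l) (inf sequentially (principal (range r)))"
  using assms tendsto_mono[OF inf_sequentially_principal_range_le]
  by (simp add: filterlim_filtermap comp_def)

theorem mainTheorem1:
  fixes x d :: "nat \<Rightarrow> real ^ 'n" and xbar :: "real ^ 'n"
  assumes summ: "summable (\<lambda>k. norm (x (Suc k + 1) - x (k + 1)) * norm (d (k + 1)))"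
    and acc_x: "\<forall>e>0. \<exists>\<^sub>F k in sequentially. dist (x k) xbar < e"
    and acc_d: "\<forall>e>0. \<exists>\<^sub>F k in sequentially. norm (d k) < e"
  shows "\<exists>J. infinite J \<and> J \<subseteq> {1..} \<and>
           (x \<longlongrightarrow> xbar) (inf sequentially (principal J)) \<and>
           (d \<longlongrightarrow> 0) (inf sequentially (principal J))"
proof -
  have summ0: "summable (\<lambda>k. norm (x (Suc k) - x k) * norm (d k))"
    using summ summable_Suc_iff[of "\<lambda>k. norm (x (Suc k) - x k) * norm (d k)"] by simp
  define good where "good n k \<longleftrightarrow>
      dist (x k) xbar < 1 / real (Suc n) \<and> norm (d k) < 1 / real (Suc n) \<and> k \<ge> 1" for n k
  then have "\<exists>\<^sub>F k in sequentially. good n k" for n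
    using frequently_eventually_frequently[OF
        frequently_close_and_small[OF summ0 acc_x acc_d] eventually_ge_at_top]
    by simp
  then obtain r where r: "strict_mono r" and good: "\<And>n. good n (r n)"
    by (rule frequently_diagonal_strict_mono[of good]) blast
  show ?thesis
  proof (intro exI conjI)
    show "infinite (range r)"
      using r strict_mono_imp_inj_on range_inj_infinite by blast
    show "range r \<subseteq> {1..}"
      using good unfolding good_def by auto
    have "(x \<circ> r) \<longlonglongrightarrow> xbar"
      using good unfolding good_def by (subst tendsto_dist_iff) (intro LIMSEQ_norm_0, simp)
    then show "(x \<longlongrightarrow> xbar) (inf sequentially (principal (range r)))"
      by (rule tendsto_inf_principal_range_subseq[OF r])
    have "(d \<circ> r) \<longlonglongrightarrow> 0"
      using good unfolding good_def by (intro LIMSEQ_norm_0) simp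
    then show "(d \<longlongrightarrow> 0) (inf sequentially (principal (range r)))"
      by (rule tendsto_inf_principal_range_subseq[OF r])
  qed
qed

end
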